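(* Let $N$ be a finite set, $C\subseteq N$ with $|C|\ge 2$ and $k\in\{1,\ldots,|C|-1\}$. Define $\tau\in\mathbb{R}^{\mathcal{S}}$ by $\tau(S)=(-1)^{|S|-k-1}\binom{|S|-2}{|S|-k-1}$ if $S\subseteq C$ and $|S|\ge k+1$, and $\tau(S)=0$ otherwise. Then for every $\eta\in\mathbb{R}^{\Upsilon}$, $$\sum_{S\in\mathcal{S}}\tau(S)\,c_\eta(S)=\sum_{a\in C}\ \sum_{B\subseteq N\setminus\{a\}:\,|B\cap C|\ge k}\eta(a|B),$$ so that the $k$-cluster inequality $\sum_{a\in C}\sum_{B\subseteq N\setminus\{a\}:|B\cap C|\ge k}\eta(a|B)\le|C|-k$ takes, in the characteristic-imset mode, the form $\sum_{S\in\mathcal{S}}\tau(S)c(S)\le |C|-k$.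
   Context: $\Upsilon=\{(a|B): a\in N,\ \emptyset\neq B\subseteq N\setminus\{a\}\}$; $\mathcal{S}=\{S\subseteq N:|S|\ge2\}$; for $\eta\in\mathbb{R}^{\Upsilon}$, $c_\eta\in\mathbb{R}^{\mathcal{S}}$ is defined by $c_\eta(S)=\sum_{a\in S}\sum_{B:\,S\setminus\{a\}\subseteq B\subseteq N\setminus\{a\}}\eta(a|B)$. *)

theory Defs
  imports Complex_Main
begin

text \<open>An element eta of R^Upsilon, Upsilon = {(a|B): a in N, B nonempty, B subset N - {a}},
  is represented as a total function of two arguments; only its values on Upsilon are used
  below (c_eta only uses B containing S - {a}, nonempty as card S >= 2).\<close>

definition calS :: "'a set \<Rightarrow> 'a set set" where
  "calS N = {S. S \<subseteq> N \<and> card S \<ge> 2}"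

definition c_eta :: "'a set \<Rightarrow> ('a \<Rightarrow> 'a set \<Rightarrow> real) \<Rightarrow> 'a set \<Rightarrow> real" where
  "c_eta N \<eta> S = (\<Sum>a\<in>S. \<Sum>B\<in>{B. S - {a} \<subseteq> B \<and> B \<subseteq> N - {a}}. \<eta> a B)"

definition tau :: "'a set \<Rightarrow> nat \<Rightarrow> 'a set \<Rightarrow> real" where
  "tau C k S = (if S \<subseteq> C \<and> card S \<ge> k + 1
     then (-1) ^ (card S - k - 1) * real ((card S - 2) choose (card S - k - 1))
     else 0)"

end

theory Submission imports Defs begin

text \<open>Exchanging the order of summation, the coefficient of \<open>\<eta>(a|B)\<close> on the left is the sum
  of \<open>\<tau>(S)\<close> over the sets \<open>S = {a} \<union> T\<close> with \<open>T \<subseteq> B\<close>. It vanishes unless \<open>a \<in> C\<close>, and then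
  only \<open>T \<subseteq> D = B \<inter> C\<close> contribute, with a weight depending on \<open>|T|\<close> alone. Grouping the \<open>T\<close> by
  size, the coefficient becomes a binomial sum which, by Pascal's rule and binomial inversion, is 1
  if \<open>|D| \<ge> k\<close> and 0 otherwise.\<close>

lemma sum_choose_alternating_choose:
  fixes m j :: nat
  shows "(\<Sum>t\<le>m. of_nat (m choose t) * (if j \<le> t then (-1)^(t-j) * of_nat (t choose j) else 0))
    = (if m = j then 1 else (0::'a::comm_ring_1))"
proof (cases "j \<le> m")
  case False
  then show ?thesis by (intro trans[OF sum.neutral]) auto
next
  case True
  have "(\<Sum>t\<le>m. of_nat (m choose t) * (if j \<le> t then (-1)^(t-j) * of_nat (t choose j) else 0))
      = (\<Sum>t\<in>{j..m}. of_nat (m choose t) * ((-1)^(t-j) * of_nat (t choose j)) :: 'a)"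
    by (rule sum.mono_neutral_cong_right) auto
  also have "\<dots> = (\<Sum>t\<in>{j..m}. of_nat (m choose j) * ((-1)^(t-j) * of_nat ((m-j) choose (t-j))))"
  proof (rule sum.cong[OF refl])
    fix t assume "t \<in> {j..m}"
    then have "(m choose t) * (t choose j) = (m choose j) * ((m-j) choose (t-j))"
      by (intro choose_mult) auto
    then have "of_nat (m choose t) * of_nat (t choose j) = (of_nat (m choose j) * of_nat ((m-j) choose (t-j)) :: 'a)"
      by (metis of_nat_mult)
    then show "of_nat (m choose t) * ((-1)^(t-j) * of_nat (t choose j))
             = of_nat (m choose j) * ((-1)^(t-j) * (of_nat ((m-j) choose (t-j)) :: 'a))"
      by (metis mult.left_commute)
  qed
  also have "\<dots> = of_nat (m choose j) * (\<Sum>i\<le>m-j. (-1)^i * of_nat ((m-j) choose i))"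
    using sum.shift_bounds_cl_nat_ivl[of "\<lambda>i. (-1)^(i-j) * (of_nat ((m-j) choose (i-j)) :: 'a)" 0 j "m-j"]
    by (simp add: sum_distrib_left[symmetric] True atLeast0AtMost)
  also have "\<dots> = (if m = j then 1 else 0)"
    using choose_alternating_sum[of "m-j", where 'a='a] True by auto
  finally show ?thesis .
qed

definition cluster_weight :: "nat \<Rightarrow> nat \<Rightarrow> real" where
  "cluster_weight k t = (if k \<le> t then (-1)^(t-k) * real ((t-1) choose (t-k)) else 0)"

lemma sum_choose_cluster_weight:
  assumes "1 \<le> k"
  shows "(\<Sum>t\<le>m. real (m choose t) * cluster_weight k t) = (if k \<le> m then 1 else 0)"
proof (induction m)
  case 0
  then show ?case using assms by (simp add: cluster_weight_def)
next
  case (Suc m)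
  have weight_0: "cluster_weight k 0 = 0"
    using assms by (simp add: cluster_weight_def)
  have weight_Suc: "cluster_weight k (Suc t)
      = (if k - 1 \<le> t then (-1)^(t-(k-1)) * real (t choose (k-1)) else 0)" for t
  proof (cases "k \<le> Suc t")
    case True
    then have "t choose (Suc t - k) = t choose (k-1)"
      using binomial_symmetric[of "k-1" t] assms by (simp add: Suc_diff_le)
    then show ?thesis using True assms by (simp add: cluster_weight_def Suc_diff_le)
  qed (use assms in \<open>auto simp: cluster_weight_def\<close>)
  have shift: "(\<Sum>t\<le>m. f (Suc t) * cluster_weight k (Suc t)) = (\<Sum>t\<le>Suc m. f t * cluster_weight k t)"
    for f :: "nat \<Rightarrow> real"
    by (subst sum.atMost_Suc_shift) (simp add: weight_0 del: sum.atMost_Suc)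
  \<comment> \<open>Pascal's rule leaves the sum for \<open>m\<close> plus binomial inversion at \<open>j = k - 1\<close>.\<close>
  have "(\<Sum>t\<le>Suc m. real (Suc m choose t) * cluster_weight k t)
      = (\<Sum>t\<le>m. real (m choose t) * cluster_weight k (Suc t))
        + (\<Sum>t\<le>Suc m. real (m choose t) * cluster_weight k t)"
    by (simp only: shift[symmetric, of "\<lambda>t. real (Suc m choose t)"]
                   shift[symmetric, of "\<lambda>t. real (m choose t)"])
       (simp add: sum.distrib distrib_right)
  also have "(\<Sum>t\<le>m. real (m choose t) * cluster_weight k (Suc t)) = (if m = k - 1 then 1 else 0)"
    unfolding weight_Suc by (rule sum_choose_alternating_choose)
  finally show ?case using Suc.IH assms by auto
qed

lemma sum_Pow_card:
  assumes "finite D"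
  shows "(\<Sum>T\<in>Pow D. f (card T)) = (\<Sum>t\<le>card D. of_nat (card D choose t) * (f t :: 'a::comm_semiring_1))"
proof -
  have "(\<Sum>T\<in>Pow D. f (card T)) = (\<Sum>t\<le>card D. \<Sum>T\<in>{T \<in> Pow D. card T = t}. f (card T))"
    by (rule sum.group[symmetric]) (use assms card_mono in auto)
  also have "\<dots> = (\<Sum>t\<le>card D. \<Sum>T\<in>{T. T \<subseteq> D \<and> card T = t}. f t)"
    by (intro sum.cong) auto
  finally show ?thesis
    using n_subsets[OF assms] by simp
qed

lemma tau_insert:
  assumes "a \<in> C" "T \<subseteq> C - {a}" "finite T" "1 \<le> k"
  shows "tau C k (insert a T) = cluster_weight k (card T)"
proof -
  have "a \<notin> T"
    using assms(2) by blast
  then have "card (insert a T) = Suc (card T)" "insert a T \<subseteq> C"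
    using assms by auto
  then show ?thesis
    using assms(4) by (auto simp: tau_def cluster_weight_def numeral_2_eq_2)
qed

lemma sum_tau_insert_Pow:
  assumes "a \<in> C" "D \<subseteq> C - {a}" "finite D" "1 \<le> k"
  shows "(\<Sum>S\<in>insert a ` Pow D. tau C k S) = (if k \<le> card D then 1 else 0)"
proof -
  have "a \<notin> D"
    using assms(2) by blast
  then have "inj_on (insert a) (Pow D)"
    by (intro inj_onI) (metis Diff_insert_absorb PowD subsetD)
  then have "(\<Sum>S\<in>insert a ` Pow D. tau C k S) = (\<Sum>T\<in>Pow D. tau C k (insert a T))"
    by (simp add: sum.reindex comp_def)
  also have "\<dots> = (\<Sum>T\<in>Pow D. cluster_weight k (card T))"
  proof (rule sum.cong[OF refl])
    fix T assume "T \<in> Pow D"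
    then have "T \<subseteq> C - {a}" "finite T"
      using assms(2) by (auto intro: finite_subset[OF _ assms(3)])
    then show "tau C k (insert a T) = cluster_weight k (card T)"
      using tau_insert[OF assms(1) _ _ assms(4)] by blast
  qed
  also have "\<dots> = (if k \<le> card D then 1 else 0)"
    using assms(3,4) by (simp add: sum_Pow_card sum_choose_cluster_weight)
  finally show ?thesis .
qed

lemma tau_containing_eq_tau_insert_Pow:
  assumes "C \<subseteq> N" "a \<in> C" "1 \<le> k" "B \<subseteq> N - {a}"
  shows "(if S \<in> calS N \<and> a \<in> S \<and> S - {a} \<subseteq> B then tau C k S else 0)
       = (if S \<in> insert a ` Pow (B \<inter> C) then tau C k S else 0)"
proof (cases "S \<subseteq> C \<and> card S \<ge> k + 1")
  case True
  have "S \<in> calS N \<and> a \<in> S \<and> S - {a} \<subseteq> B \<longleftrightarrow> S \<in> insert a ` Pow (B \<inter> C)"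
  proof
    assume "S \<in> calS N \<and> a \<in> S \<and> S - {a} \<subseteq> B"
    then have "S = insert a (S - {a})" "S - {a} \<in> Pow (B \<inter> C)"
      using True by auto
    then show "S \<in> insert a ` Pow (B \<inter> C)" by blast
  next
    assume "S \<in> insert a ` Pow (B \<inter> C)"
    then show "S \<in> calS N \<and> a \<in> S \<and> S - {a} \<subseteq> B"
      using True assms by (auto simp: calS_def)
  qed
  then show ?thesis by simp
qed (auto simp: tau_def)

lemma sum_tau_containing:
  assumes "finite N" "C \<subseteq> N" "1 \<le> k" "B \<subseteq> N - {a}"
  shows "(\<Sum>S\<in>calS N. if a \<in> S \<and> S - {a} \<subseteq> B then tau C k S else 0)
       = (if a \<in> C \<and> k \<le> card (B \<inter> C) then 1 else 0)"
proof (cases "a \<in> C")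
  case False
  then have "tau C k S = 0" if "a \<in> S" for S
    using that by (auto simp: tau_def)
  then show ?thesis
    using False by (auto intro: sum.neutral)
next
  case True
  have D: "B \<inter> C \<subseteq> C - {a}" "finite (B \<inter> C)"
    using assms(1,4) by (auto intro: finite_subset)
  have "{S \<in> Pow N. S \<in> insert a ` Pow (B \<inter> C)} = insert a ` Pow (B \<inter> C)"
    using assms(2,4) True by blast
  moreover have "(\<Sum>S\<in>calS N. if a \<in> S \<and> S - {a} \<subseteq> B then tau C k S else 0)
      = (\<Sum>S\<in>Pow N. if S \<in> calS N \<and> a \<in> S \<and> S - {a} \<subseteq> B then tau C k S else 0)"
    using assms(1) by (intro sum.mono_neutral_cong_left) (auto simp: calS_def)
  ultimately have "(\<Sum>S\<in>calS N. if a \<in> S \<and> S - {a} \<subseteq> B then tau C k S else 0)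
      = (\<Sum>S\<in>insert a ` Pow (B \<inter> C). tau C k S)"
    using assms True
    by (simp only: tau_containing_eq_tau_insert_Pow sum.inter_filter[symmetric] finite_Pow_iff)
  then show ?thesis
    using sum_tau_insert_Pow[OF True D assms(3)] True by simp
qed

lemma sum_subsets_filter:
  assumes "finite X"
  shows "(\<Sum>B | B \<subseteq> X \<and> P B. f B) = (\<Sum>B\<in>Pow X. if P B then f B else 0)"
  using assms by (subst sum.inter_filter[symmetric]) (simp_all add: Pow_def)

lemma c_eta_eq_sum_Pow:
  assumes "finite N" "S \<subseteq> N"
  shows "c_eta N \<eta> S
       = (\<Sum>a\<in>N. \<Sum>B\<in>Pow (N - {a}). if a \<in> S \<and> S - {a} \<subseteq> B then \<eta> a B else 0)"
proof -
  have "c_eta N \<eta> S = (\<Sum>a\<in>S. \<Sum>B\<in>Pow (N - {a}). if S - {a} \<subseteq> B then \<eta> a B else 0)"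
    unfolding c_eta_def using assms(1) by (simp add: conj_commute sum_subsets_filter)
  also have "\<dots> = (\<Sum>a\<in>N. \<Sum>B\<in>Pow (N - {a}). if a \<in> S \<and> S - {a} \<subseteq> B then \<eta> a B else 0)"
    using assms by (intro sum.mono_neutral_cong_left) auto
  finally show ?thesis .
qed

theorem lemma11:
  fixes N C :: "'a set" and k :: nat and \<eta> :: "'a \<Rightarrow> 'a set \<Rightarrow> real"
  assumes "finite N" and "C \<subseteq> N" and "card C \<ge> 2"
    and "1 \<le> k" and "k \<le> card C - 1"
  shows "(\<Sum>S\<in>calS N. tau C k S * c_eta N \<eta> S)
       = (\<Sum>a\<in>C. \<Sum>B\<in>{B. B \<subseteq> N - {a} \<and> card (B \<inter> C) \<ge> k}. \<eta> a B)"
proof -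
  have "(\<Sum>S\<in>calS N. tau C k S * c_eta N \<eta> S)
      = (\<Sum>S\<in>calS N. \<Sum>a\<in>N. \<Sum>B\<in>Pow (N - {a}).
           \<eta> a B * (if a \<in> S \<and> S - {a} \<subseteq> B then tau C k S else 0))"
    using assms(1) by (auto simp: calS_def c_eta_eq_sum_Pow sum_distrib_left intro!: sum.cong)
  also have "\<dots> = (\<Sum>a\<in>N. \<Sum>B\<in>Pow (N - {a}).
           \<eta> a B * (\<Sum>S\<in>calS N. if a \<in> S \<and> S - {a} \<subseteq> B then tau C k S else 0))"
    by (simp add: sum.swap[of _ "calS N"] sum_distrib_left)
  also have "\<dots> = (\<Sum>a\<in>N. \<Sum>B\<in>Pow (N - {a}). if a \<in> C \<and> k \<le> card (B \<inter> C) then \<eta> a B else 0)"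
    using assms(1,2,4) by (intro sum.cong refl) (simp add: sum_tau_containing)
  also have "\<dots> = (\<Sum>a\<in>C. \<Sum>B\<in>Pow (N - {a}). if k \<le> card (B \<inter> C) then \<eta> a B else 0)"
    using assms(1,2) by (intro sum.mono_neutral_cong_right) auto
  also have "\<dots> = (\<Sum>a\<in>C. \<Sum>B\<in>{B. B \<subseteq> N - {a} \<and> card (B \<inter> C) \<ge> k}. \<eta> a B)"
    using assms(1) by (simp add: sum_subsets_filter)
  finally show ?thesis .
qed

end
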